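(* Let $f:[0,\infty)\to\mathbb{C}$ be smooth with support in $[0,\rho]$ for some $\rho<1$. For $i,j\in\mathbb{N}_0$ and $t\in(0,1)$ let $$G_{i,j}(t)=\int_{1-t}^{1}u f(u)\,[Q(t,u)]^{i}\,(u^{2}+1-t^{2})^{j}\,\mathrm{d}u,\qquad Q(t,u)=((1+t)^2-u^2)(u^2-(1-t)^2).$$ Then for every $r\in\mathbb{N}_0$ and every $m\in\mathbb{N}_0$, $$\sum_{l=0}^{\lfloor r/2\rfloor}\frac{2^{2l}\,r!}{l!\,(r-2l)!}\frac{(m+r)!}{(m+r-l)!}\,[D^{r-2l}G_{m+r-l,0}](t)=4^{r}(m+1)\cdots(m+r)\,G_{m,r}(t),\qquad t\in(0,1).$$
   Context: $D$ denotes the operator $(D\varphi)(t)=\frac{1}{t}\varphi'(t)$ and $D^{j}$ its $j$-fold iterate ($D^0$ the identity); $\lfloor\cdot\rfloor$ is the floor function; the empty product $(m+1)\cdots(m+r)$ for $r=0$ equals $1$. *)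

theory Defs
  imports "HOL-Analysis.Analysis"
begin

definition smooth_on_nonneg :: "(real \<Rightarrow> complex) \<Rightarrow> bool" where
  "smooth_on_nonneg f \<longleftrightarrow>
     (\<exists>Df :: nat \<Rightarrow> real \<Rightarrow> complex. Df 0 = f \<and>
        (\<forall>k. \<forall>x\<ge>0. (Df k has_vector_derivative Df (Suc k) x) (at x within {0..})))"

definition Qfun :: "real \<Rightarrow> real \<Rightarrow> real" where
  "Qfun t u = ((1 + t)^2 - u^2) * (u^2 - (1 - t)^2)"

definition Gfun :: "(real \<Rightarrow> complex) \<Rightarrow> nat \<Rightarrow> nat \<Rightarrow> real \<Rightarrow> complex" where
  "Gfun f i j t = integral {1 - t..1}
     (\<lambda>u. complex_of_real u * f u * complex_of_real (Qfun t u) ^ i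
           * complex_of_real (u^2 + 1 - t^2) ^ j)"

definition Dop :: "(real \<Rightarrow> complex) \<Rightarrow> real \<Rightarrow> complex" where
  "Dop \<phi> t = vector_derivative \<phi> (at t) / complex_of_real t"

end

theory Submission
  imports Defs "HOL-Computational_Algebra.Polynomial"
begin

text \<open>Differentiating under the integral sign gives
  \<open>G'_{a,b}(t) = t (4a G_{a-1,b+1}(t) - 2b G_{a,b-1}(t))\<close> for \<open>a \<ge> 1\<close>: the boundary term from the
  moving endpoint \<open>u = 1 - t\<close> vanishes because \<open>Q(t, 1 - t) = 0\<close>. Hence \<open>D\<close> maps combinations
  of the \<open>G_{a,b}\<close> with \<open>a \<ge> n + 1\<close> to combinations with \<open>a \<ge> n\<close>, so every \<open>D^k G_{n,0}\<close> with
  \<open>k < n\<close> is differentiable on \<open>(0,1)\<close> and \<open>D\<close> acts linearly on the left-hand side \<open>F_{r,m}\<close>.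
  The coefficient identity \<open>c(r+1,m,l) = c(r,m+1,l) + 8r(m+r+1) c(r-1,m+1,l-1)\<close> turns this into
  \<open>F_{r+1,m} = D F_{r,m+1} + 8r(m+r+1) F_{r-1,m+1}\<close>, and induction on \<open>r\<close> gives
  \<open>F_{r,m} = 4^r (m+1)...(m+r) G_{m,r}\<close>.\<close>

section \<open>Differentiating parameter integrals\<close>

lemma has_vector_derivative_integral_reflected_lower:
  fixes h :: "real \<Rightarrow> 'a::banach"
  assumes h: "continuous_on {0..1} h" and t: "0 < t" "t < 1"
  shows "((\<lambda>s. integral {1 - s..1} h) has_vector_derivative h (1 - t)) (at t)"
proof -
  have "((\<lambda>s. 1 - s) has_vector_derivative - 1) (at t)"
    by (auto intro!: derivative_eq_intros)
  moreover have "((\<lambda>x. integral {x..1} h) has_vector_derivative - h (1 - t)) (at (1 - t))"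
    using integral_has_vector_derivative'[OF h, of "1 - t"] at_within_Icc_at[of 0 "1 - t" 1] t
    by simp
  ultimately have "((\<lambda>x. integral {x..1} h) \<circ> (\<lambda>s. 1 - s) has_vector_derivative (- 1) *\<^sub>R - h (1 - t)) (at t)"
    by (rule vector_diff_chain_at)
  then show ?thesis
    by (simp add: o_def)
qed

lemma poly_eq_sum_atMost:
  fixes p :: "'a::comm_semiring_1 poly"
  assumes "degree p \<le> N"
  shows "poly p x = (\<Sum>k\<le>N. coeff p k * x ^ k)"
  unfolding poly_altdef
  by (rule sum.mono_neutral_left) (use assms in \<open>auto intro: le_degree\<close>)

lemma poly_pderiv_eq_sum_atMost:
  fixes p :: "real poly"
  assumes "degree p \<le> N"
  shows "poly (pderiv p) x = (\<Sum>k\<le>N. coeff p k * (real k * x ^ (k - 1)))"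
proof -
  have "((\<lambda>x. \<Sum>k\<le>N. coeff p k * x ^ k) has_real_derivative
          (\<Sum>k\<le>N. coeff p k * (real k * x ^ (k - 1)))) (at x)"
    by (intro DERIV_sum DERIV_cmult) (auto intro!: derivative_eq_intros)
  moreover have "(\<lambda>x. \<Sum>k\<le>N. coeff p k * x ^ k) = poly p"
    using poly_eq_sum_atMost[OF assms] by auto
  ultimately show ?thesis
    using DERIV_unique poly_DERIV by metis
qed

definition continuous_coeffs :: "('a::topological_space \<Rightarrow> real poly) \<Rightarrow> bool" where
  "continuous_coeffs p \<longleftrightarrow> (\<forall>k. continuous_on UNIV (\<lambda>u. coeff (p u) k))"

lemma continuous_coeffs_zero: "continuous_coeffs (\<lambda>u. 0)"
  by (simp add: continuous_coeffs_def)

lemma continuous_coeffs_one: "continuous_coeffs (\<lambda>u. 1)"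
  by (simp add: continuous_coeffs_def coeff_1)

lemma continuous_coeffs_pCons:
  assumes "continuous_on UNIV a" "continuous_coeffs p"
  shows "continuous_coeffs (\<lambda>u. pCons (a u) (p u))"
  unfolding continuous_coeffs_def
proof
  fix k
  show "continuous_on UNIV (\<lambda>u. coeff (pCons (a u) (p u)) k)"
    using assms by (cases k) (auto simp: continuous_coeffs_def)
qed

lemma continuous_coeffs_mult:
  "continuous_coeffs p \<Longrightarrow> continuous_coeffs q \<Longrightarrow> continuous_coeffs (\<lambda>u. p u * q u)"
  unfolding continuous_coeffs_def coeff_mult by (auto intro!: continuous_intros)

lemma continuous_coeffs_power:
  "continuous_coeffs p \<Longrightarrow> continuous_coeffs (\<lambda>u. p u ^ n)"
  by (induction n) (simp_all add: continuous_coeffs_one continuous_coeffs_mult)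

lemma has_vector_derivative_integral_poly_param:
  fixes p :: "real \<Rightarrow> real poly" and w :: "real \<Rightarrow> 'a::banach"
  assumes p: "continuous_coeffs p" "\<And>u. degree (p u) \<le> N"
    and w: "continuous_on {0..1} w" and t: "0 < t" "t < 1"
  shows "((\<lambda>s. integral {1 - s..1} (\<lambda>u. poly (p u) s *\<^sub>R w u)) has_vector_derivative
           poly (p (1 - t)) t *\<^sub>R w (1 - t)
           + integral {1 - t..1} (\<lambda>u. poly (pderiv (p u)) t *\<^sub>R w u)) (at t)"
proof -
  \<comment> \<open>Expanding in powers of \<open>s\<close> separates the parameter from the integration variable.\<close>
  define h where "h k u = coeff (p u) k *\<^sub>R w u" for k u
  have h_cont: "continuous_on {0..1} (h k)" for k
    using p(1) unfolding h_def continuous_coeffs_def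
    by (intro continuous_intros w) (auto intro: continuous_on_subset)
  have h_int: "h k integrable_on {1 - s..1}" if "s \<in> {0<..<1}" for k s
    using that by (intro integrable_continuous_real continuous_on_subset[OF h_cont]) auto
  have poly_sum: "poly (p u) s *\<^sub>R w u = (\<Sum>k\<le>N. s ^ k *\<^sub>R h k u)" for s u
    by (simp add: poly_eq_sum_atMost[OF p(2)] h_def scaleR_sum_left mult.commute)
  have pderiv_sum: "poly (pderiv (p u)) s *\<^sub>R w u = (\<Sum>k\<le>N. (real k * s ^ (k - 1)) *\<^sub>R h k u)" for s u
    by (simp add: poly_pderiv_eq_sum_atMost[OF p(2)] h_def scaleR_sum_left mult.commute)
  have split: "integral {1 - s..1} (\<lambda>u. poly (p u) s *\<^sub>R w u)
      = (\<Sum>k\<le>N. s ^ k *\<^sub>R integral {1 - s..1} (h k))" if "s \<in> {0<..<1}" for s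
    using that by (simp add: poly_sum integral_sum h_int)
  have "((\<lambda>s. \<Sum>k\<le>N. s ^ k *\<^sub>R integral {1 - s..1} (h k)) has_vector_derivative
      (\<Sum>k\<le>N. t ^ k *\<^sub>R h k (1 - t) + (real k * t ^ (k - 1)) *\<^sub>R integral {1 - t..1} (h k))) (at t)"
    by (intro has_vector_derivative_sum has_vector_derivative_scaleR
        has_vector_derivative_integral_reflected_lower h_cont t) (auto intro!: derivative_eq_intros)
  also have "(\<Sum>k\<le>N. t ^ k *\<^sub>R h k (1 - t) + (real k * t ^ (k - 1)) *\<^sub>R integral {1 - t..1} (h k))
      = poly (p (1 - t)) t *\<^sub>R w (1 - t) + integral {1 - t..1} (\<lambda>u. poly (pderiv (p u)) t *\<^sub>R w u)"
    using t by (simp add: sum.distrib poly_sum pderiv_sum integral_sum integrable_cmul h_int)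
  finally show ?thesis
    by (rule has_vector_derivative_transform_within_open[where S = "{0<..<1}"])
       (use t split in auto)
qed

definition Q_poly :: "real \<Rightarrow> real poly" where
  "Q_poly u = [: - (u ^ 4) + 2 * u\<^sup>2 - 1, 0, 2 * u\<^sup>2 + 2, 0, - 1 :]"

definition P_poly :: "real \<Rightarrow> real poly" where
  "P_poly u = [: u\<^sup>2 + 1, 0, - 1 :]"

lemma poly_Q_poly: "poly (Q_poly u) t = Qfun t u"
  by (simp add: Q_poly_def Qfun_def algebra_simps power2_eq_square power4_eq_xxxx)

lemma poly_P_poly: "poly (P_poly u) t = u\<^sup>2 + 1 - t\<^sup>2"
  by (simp add: P_poly_def algebra_simps power2_eq_square)

lemma continuous_coeffs_Q_poly: "continuous_coeffs Q_poly"
  unfolding Q_poly_def by (intro continuous_coeffs_pCons continuous_coeffs_zero continuous_intros)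

lemma continuous_coeffs_P_poly: "continuous_coeffs P_poly"
  unfolding P_poly_def by (intro continuous_coeffs_pCons continuous_coeffs_zero continuous_intros)

lemma degree_Q_poly: "degree (Q_poly u) \<le> 4"
  unfolding Q_poly_def by (rule order_trans[OF degree_pCons_le], simp)+

lemma degree_P_poly: "degree (P_poly u) \<le> 2"
  unfolding P_poly_def by (rule order_trans[OF degree_pCons_le], simp)+

lemma has_real_derivative_Qfun:
  "((\<lambda>s. Qfun s u) has_real_derivative 4 * t * (u\<^sup>2 + 1 - t\<^sup>2)) (at t)"
  unfolding Qfun_def
  by (rule derivative_eq_intros refl)+ (simp add: algebra_simps power2_eq_square)

definition kernel_poly :: "nat \<Rightarrow> nat \<Rightarrow> real \<Rightarrow> real poly" where
  "kernel_poly a b u = Q_poly u ^ a * P_poly u ^ b"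

lemma poly_kernel_poly: "poly (kernel_poly a b u) t = Qfun t u ^ a * (u\<^sup>2 + 1 - t\<^sup>2) ^ b"
  by (simp add: kernel_poly_def poly_Q_poly poly_P_poly)

lemma continuous_coeffs_kernel_poly: "continuous_coeffs (kernel_poly a b)"
  unfolding kernel_poly_def
  by (intro continuous_coeffs_mult continuous_coeffs_power continuous_coeffs_Q_poly continuous_coeffs_P_poly)

lemma degree_kernel_poly: "degree (kernel_poly a b u) \<le> 4 * a + 2 * b"
proof -
  have "degree (kernel_poly a b u) \<le> degree (Q_poly u) * a + degree (P_poly u) * b"
    unfolding kernel_poly_def by (intro order_trans[OF degree_mult_le] add_mono degree_power_le)
  also have "\<dots> \<le> 4 * a + 2 * b"
    using degree_Q_poly degree_P_poly by (intro add_mono) simp_all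
  finally show ?thesis .
qed

lemma poly_pderiv_kernel_poly:
  "poly (pderiv (kernel_poly a b u)) t = t * (4 * real a * (Qfun t u ^ (a - 1) * (u\<^sup>2 + 1 - t\<^sup>2) ^ (b + 1))
     - 2 * real b * (Qfun t u ^ a * (u\<^sup>2 + 1 - t\<^sup>2) ^ (b - 1)))"
proof -
  have "((\<lambda>s. poly (kernel_poly a b u) s) has_real_derivative
      (real a * (4 * t * (u\<^sup>2 + 1 - t\<^sup>2) * Qfun t u ^ (a - 1))) * (u\<^sup>2 + 1 - t\<^sup>2) ^ b
      + (real b * (- (2 * t) * (u\<^sup>2 + 1 - t\<^sup>2) ^ (b - 1))) * Qfun t u ^ a) (at t)"
    unfolding poly_kernel_poly
    by (rule derivative_eq_intros has_real_derivative_Qfun refl)+ (simp add: power2_eq_square)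
  moreover have "(real a * (4 * t * (u\<^sup>2 + 1 - t\<^sup>2) * Qfun t u ^ (a - 1))) * (u\<^sup>2 + 1 - t\<^sup>2) ^ b
      + (real b * (- (2 * t) * (u\<^sup>2 + 1 - t\<^sup>2) ^ (b - 1))) * Qfun t u ^ a
      = t * (4 * real a * (Qfun t u ^ (a - 1) * (u\<^sup>2 + 1 - t\<^sup>2) ^ (b + 1))
        - 2 * real b * (Qfun t u ^ a * (u\<^sup>2 + 1 - t\<^sup>2) ^ (b - 1)))"
    by (simp add: algebra_simps)
  ultimately show ?thesis
    using DERIV_unique poly_DERIV by metis
qed

lemma Gfun_eq_integral_kernel_poly:
  "Gfun f a b s = integral {1 - s..1} (\<lambda>u. poly (kernel_poly a b u) s *\<^sub>R (complex_of_real u * f u))"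
  unfolding Gfun_def poly_kernel_poly by (simp add: scaleR_conv_of_real mult_ac)

lemma has_vector_derivative_Gfun:
  assumes f: "continuous_on {0..1} f" and a: "1 \<le> a" and t: "0 < t" "t < 1"
  shows "(Gfun f a b has_vector_derivative
           t *\<^sub>R ((4 * real a) *\<^sub>R Gfun f (a - 1) (b + 1) t - (2 * real b) *\<^sub>R Gfun f a (b - 1) t))
         (at t)"
proof -
  define w where "w u = complex_of_real u * f u" for u
  have w: "continuous_on {0..1} w"
    unfolding w_def by (intro continuous_intros f)
  have G: "Gfun f i j s = integral {1 - s..1} (\<lambda>u. poly (kernel_poly i j u) s *\<^sub>R w u)" for i j s
    unfolding w_def by (rule Gfun_eq_integral_kernel_poly)
  have "Qfun t (1 - t) = 0"
    by (simp add: Qfun_def)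
  then have boundary: "poly (kernel_poly a b (1 - t)) t = 0"
    using a by (simp add: poly_kernel_poly)
  have integrable: "(\<lambda>u. poly (kernel_poly i j u) t *\<^sub>R w u) integrable_on {1 - t..1}" for i j
    using t w unfolding poly_kernel_poly Qfun_def
    by (intro integrable_continuous_real continuous_intros) (auto intro: continuous_on_subset)
  have "integral {1 - t..1} (\<lambda>u. poly (pderiv (kernel_poly a b u)) t *\<^sub>R w u)
      = integral {1 - t..1} (\<lambda>u. (t * (4 * real a)) *\<^sub>R (poly (kernel_poly (a - 1) (b + 1) u) t *\<^sub>R w u)
          - (t * (2 * real b)) *\<^sub>R (poly (kernel_poly a (b - 1) u) t *\<^sub>R w u))"
    by (rule integral_cong) (simp add: poly_pderiv_kernel_poly poly_kernel_poly algebra_simps)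
  also have "\<dots> = (t * (4 * real a)) *\<^sub>R Gfun f (a - 1) (b + 1) t - (t * (2 * real b)) *\<^sub>R Gfun f a (b - 1) t"
    by (simp only: integral_diff[OF integrable_cmul[OF integrable] integrable_cmul[OF integrable]]
        integral_cmul G)
  finally have interior: "integral {1 - t..1} (\<lambda>u. poly (pderiv (kernel_poly a b u)) t *\<^sub>R w u)
      = t *\<^sub>R ((4 * real a) *\<^sub>R Gfun f (a - 1) (b + 1) t - (2 * real b) *\<^sub>R Gfun f a (b - 1) t)"
    by (simp add: scaleR_diff_right)
  have "((\<lambda>s. integral {1 - s..1} (\<lambda>u. poly (kernel_poly a b u) s *\<^sub>R w u)) has_vector_derivative
      poly (kernel_poly a b (1 - t)) t *\<^sub>R w (1 - t)
      + integral {1 - t..1} (\<lambda>u. poly (pderiv (kernel_poly a b u)) t *\<^sub>R w u)) (at t)"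
    using continuous_coeffs_kernel_poly degree_kernel_poly w t
    by (rule has_vector_derivative_integral_poly_param)
  then show ?thesis
    unfolding boundary interior by (simp add: G[abs_def])
qed

section \<open>The operator \<open>D\<close> on combinations of the \<open>G\<close>\<close>

lemma Dop_eqI:
  assumes "(\<phi> has_vector_derivative t *\<^sub>R d) (at t)" "t \<noteq> 0"
  shows "Dop \<phi> t = d"
  using assms by (simp add: Dop_def vector_derivative_at scaleR_conv_of_real)

lemma Dop_cong:
  assumes "open S" "t \<in> S" "\<And>s. s \<in> S \<Longrightarrow> \<phi> s = \<psi> s"
  shows "Dop \<phi> t = Dop \<psi> t"
proof -
  have "vector_derivative \<phi> (at t) = vector_derivative \<psi> (at t)"
    using assms eventually_nhds_in_open[OF assms(1,2)]
    by (intro vector_derivative_cong_eq[where A = UNIV, simplified]) (auto elim: eventually_mono)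
  then show ?thesis
    by (simp add: Dop_def)
qed

lemma Dop_sum:
  assumes "finite L" "\<And>l. l \<in> L \<Longrightarrow> (\<phi> l has_vector_derivative t *\<^sub>R Dop (\<phi> l) t) (at t)" "t \<noteq> 0"
  shows "Dop (\<lambda>s. \<Sum>l\<in>L. c l *\<^sub>R \<phi> l s) t = (\<Sum>l\<in>L. c l *\<^sub>R Dop (\<phi> l) t)"
proof (rule Dop_eqI[OF _ assms(3)])
  have "((\<lambda>s. \<Sum>l\<in>L. c l *\<^sub>R \<phi> l s) has_vector_derivative (\<Sum>l\<in>L. c l *\<^sub>R t *\<^sub>R Dop (\<phi> l) t)) (at t)"
    using assms by (intro has_vector_derivative_sum bounded_linear.has_vector_derivative[OF bounded_linear_scaleR_right]) auto
  then show "((\<lambda>s. \<Sum>l\<in>L. c l *\<^sub>R \<phi> l s) has_vector_derivative t *\<^sub>R (\<Sum>l\<in>L. c l *\<^sub>R Dop (\<phi> l) t)) (at t)"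
    by (simp add: scaleR_sum_right mult.commute)
qed

lemma Dop_scaleR:
  assumes "(\<phi> has_vector_derivative t *\<^sub>R d) (at t)" "t \<noteq> 0"
  shows "Dop (\<lambda>s. c *\<^sub>R \<phi> s) t = c *\<^sub>R d"
proof (rule Dop_eqI[OF _ assms(2)])
  show "((\<lambda>s. c *\<^sub>R \<phi> s) has_vector_derivative t *\<^sub>R c *\<^sub>R d) (at t)"
    using bounded_linear.has_vector_derivative[OF bounded_linear_scaleR_right assms(1), of c]
    by (simp add: mult.commute)
qed

text \<open>Real combinations of the \<open>G_{a,b}\<close> with \<open>a \<ge> n\<close>; rule \<open>cong\<close> makes membership depend
  only on the values on \<open>(0,1)\<close>, the only place where \<open>Dop\<close> is evaluated.\<close>

inductive G_span :: "(real \<Rightarrow> complex) \<Rightarrow> nat \<Rightarrow> (real \<Rightarrow> complex) \<Rightarrow> bool" for f where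
  Gfun: "n \<le> a \<Longrightarrow> G_span f n (\<lambda>t. c *\<^sub>R Gfun f a b t)"
| add: "G_span f n \<phi> \<Longrightarrow> G_span f n \<psi> \<Longrightarrow> G_span f n (\<lambda>t. \<phi> t + \<psi> t)"
| cong: "G_span f n \<phi> \<Longrightarrow> (\<And>t. t \<in> {0<..<1} \<Longrightarrow> \<psi> t = \<phi> t) \<Longrightarrow> G_span f n \<psi>"

lemma G_span_has_vector_derivative:
  assumes f: "continuous_on {0..1} f" and "G_span f (Suc n) \<phi>"
  shows "\<exists>\<psi>. G_span f n \<psi> \<and> (\<forall>t\<in>{0<..<1}. (\<phi> has_vector_derivative t *\<^sub>R \<psi> t) (at t))"
  using assms(2)
proof (induction "Suc n" \<phi> rule: G_span.induct)
  case (Gfun a c b)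
  define \<psi> where "\<psi> t = (c * (4 * real a)) *\<^sub>R Gfun f (a - 1) (b + 1) t
    + (- c * (2 * real b)) *\<^sub>R Gfun f a (b - 1) t" for t
  have "G_span f n \<psi>"
    unfolding \<psi>_def using Gfun by (intro G_span.add G_span.Gfun) auto
  moreover have "((\<lambda>t. c *\<^sub>R Gfun f a b t) has_vector_derivative t *\<^sub>R \<psi> t) (at t)"
    if "t \<in> {0<..<1}" for t
  proof -
    have "((\<lambda>t. c *\<^sub>R Gfun f a b t) has_vector_derivative c *\<^sub>R t *\<^sub>R
        ((4 * real a) *\<^sub>R Gfun f (a - 1) (b + 1) t - (2 * real b) *\<^sub>R Gfun f a (b - 1) t)) (at t)"
      using Gfun that
      by (intro bounded_linear.has_vector_derivative[OF bounded_linear_scaleR_right]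
          has_vector_derivative_Gfun f) auto
    then show ?thesis
      by (simp add: \<psi>_def algebra_simps)
  qed
  ultimately show ?case
    by blast
next
  case (add \<phi>\<^sub>1 \<phi>\<^sub>2)
  obtain \<psi>\<^sub>1 \<psi>\<^sub>2 where \<psi>: "G_span f n \<psi>\<^sub>1" "G_span f n \<psi>\<^sub>2"
    "\<forall>t\<in>{0<..<1}. (\<phi>\<^sub>1 has_vector_derivative t *\<^sub>R \<psi>\<^sub>1 t) (at t)"
    "\<forall>t\<in>{0<..<1}. (\<phi>\<^sub>2 has_vector_derivative t *\<^sub>R \<psi>\<^sub>2 t) (at t)"
    using add(2,4) by blast
  have "G_span f n (\<lambda>t. \<psi>\<^sub>1 t + \<psi>\<^sub>2 t)"
    using \<psi>(1,2) by (rule G_span.add)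
  moreover have "((\<lambda>t. \<phi>\<^sub>1 t + \<phi>\<^sub>2 t) has_vector_derivative t *\<^sub>R (\<psi>\<^sub>1 t + \<psi>\<^sub>2 t)) (at t)"
    if "t \<in> {0<..<1}" for t
    unfolding scaleR_right_distrib using \<psi>(3,4) that by (intro has_vector_derivative_add) auto
  ultimately show ?case
    by blast
next
  case (cong \<phi> \<phi>')
  obtain \<psi> where \<psi>: "G_span f n \<psi>" "\<forall>t\<in>{0<..<1}. (\<phi> has_vector_derivative t *\<^sub>R \<psi> t) (at t)"
    using cong(2) by blast
  have "(\<phi>' has_vector_derivative t *\<^sub>R \<psi> t) (at t)" if t: "t \<in> {0<..<1}" for t
  proof (rule has_vector_derivative_transform_within_open[where S = "{0<..<1}"])
    show "(\<phi> has_vector_derivative t *\<^sub>R \<psi> t) (at t)"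
      using \<psi>(2) t by blast
  qed (use cong(3) t in simp_all)
  with \<psi>(1) show ?case
    by blast
qed

lemma G_span_Dop:
  assumes f: "continuous_on {0..1} f" and "G_span f (Suc n) \<phi>"
  shows "G_span f n (Dop \<phi>) \<and> (\<forall>t\<in>{0<..<1}. (\<phi> has_vector_derivative t *\<^sub>R Dop \<phi> t) (at t))"
proof -
  obtain \<psi> where \<psi>: "G_span f n \<psi>" "\<forall>t\<in>{0<..<1}. (\<phi> has_vector_derivative t *\<^sub>R \<psi> t) (at t)"
    using G_span_has_vector_derivative[OF assms] by blast
  have Dop_eq: "Dop \<phi> t = \<psi> t" if "t \<in> {0<..<1}" for t
    using \<psi>(2) that by (intro Dop_eqI) auto
  have "G_span f n (Dop \<phi>)"
    using \<psi>(1) by (rule G_span.cong) (rule Dop_eq)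
  with \<psi>(2) Dop_eq show ?thesis
    by simp
qed

lemma G_span_funpow_Dop:
  assumes f: "continuous_on {0..1} f" and "G_span f n \<phi>" "k \<le> n"
  shows "G_span f (n - k) ((Dop ^^ k) \<phi>)"
  using assms(3)
proof (induction k)
  case 0
  then show ?case
    using assms(2) by simp
next
  case (Suc k)
  then have "G_span f (Suc (n - Suc k)) ((Dop ^^ k) \<phi>)"
    by (simp add: Suc_diff_Suc)
  then show ?case
    using G_span_Dop[OF f] by simp
qed

lemma has_vector_derivative_funpow_Dop_Gfun:
  assumes f: "continuous_on {0..1} f" and "k < n" "t \<in> {0<..<1}"
  shows "((Dop ^^ k) (Gfun f n 0) has_vector_derivative t *\<^sub>R Dop ((Dop ^^ k) (Gfun f n 0)) t) (at t)"
proof -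
  have "G_span f n (Gfun f n 0)"
    using G_span.Gfun[of n n f 1 0] by (auto intro: G_span.cong)
  then have "G_span f (Suc (n - Suc k)) ((Dop ^^ k) (Gfun f n 0))"
    using G_span_funpow_Dop[OF f] assms(2) by (metis Suc_diff_Suc less_imp_le)
  then show ?thesis
    using G_span_Dop[OF f] assms(3) by simp
qed

section \<open>The coefficient recursion\<close>

text \<open>The coefficients of the left-hand side, extended by \<open>0\<close> for \<open>2 l > r\<close> so that all sums can
  run over \<open>l \<le> r\<close>.\<close>

definition D_coeff :: "nat \<Rightarrow> nat \<Rightarrow> nat \<Rightarrow> real" where
  "D_coeff r m l = (if 2 * l \<le> r then
     2 ^ (2 * l) * fact r / (fact l * fact (r - 2 * l)) * fact (m + r) / fact (m + r - l) else 0)"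

lemma D_coeff_eq:
  "2 * l \<le> r \<Longrightarrow> D_coeff r m l = 2 ^ (2 * l) * fact r / (fact l * fact (r - 2 * l)) * fact (m + r) / fact (m + r - l)"
  by (simp add: D_coeff_def)

lemma D_coeff_eq_0: "r < 2 * l \<Longrightarrow> D_coeff r m l = 0"
  by (simp add: D_coeff_def)

lemma D_coeff_0: "D_coeff r m 0 = 1"
  by (simp add: D_coeff_def)

lemma D_coeff_Suc_Suc_ratio:
  assumes "2 * l < r"
  shows "D_coeff (Suc r) m (Suc l)
    = 4 * real (Suc r) * real r * real (m + r + 1) / real (Suc l) * D_coeff (r - 1) (Suc m) l"
proof -
  obtain p where r: "r = Suc (2 * l + p)"
    using assms less_iff_Suc_add by auto
  have lhs: "D_coeff (Suc r) m (Suc l) = 2 ^ (2 * Suc l) * fact (Suc (Suc (2 * l + p))) / (fact (Suc l) * fact p)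
      * fact (Suc (m + Suc (2 * l + p))) / fact (Suc (m + l + p))"
    using D_coeff_eq[of "Suc l" "Suc r" m] r by (simp add: add_ac)
  have rhs: "D_coeff (r - 1) (Suc m) l = 2 ^ (2 * l) * fact (2 * l + p) / (fact l * fact p)
      * fact (m + Suc (2 * l + p)) / fact (Suc (m + l + p))"
    using D_coeff_eq[of l "r - 1" "Suc m"] r by (simp add: add_ac)
  show ?thesis
    unfolding lhs rhs by (simp add: r field_simps)
qed

lemma D_coeff_Suc_ratio:
  assumes "2 * l < r"
  shows "D_coeff r (Suc m) (Suc l)
    = 4 * real (r - Suc (2 * l)) * real r * real (m + r + 1) / real (Suc l) * D_coeff (r - 1) (Suc m) l"
proof (cases "r = Suc (2 * l)")
  case True
  then show ?thesis
    by (simp add: D_coeff_def)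
next
  case False
  with assms have "Suc (Suc (2 * l)) \<le> r"
    by simp
  then obtain q where r: "r = Suc (Suc (2 * l + q))"
    using le_Suc_ex by (metis add_Suc)
  have lhs: "D_coeff r (Suc m) (Suc l) = 2 ^ (2 * Suc l) * fact (Suc (Suc (2 * l + q))) / (fact (Suc l) * fact q)
      * fact (Suc (Suc (Suc (m + 2 * l + q)))) / fact (Suc (Suc (m + l + q)))"
    using D_coeff_eq[of "Suc l" r "Suc m"] r by (simp add: add_ac)
  have rhs: "D_coeff (r - 1) (Suc m) l = 2 ^ (2 * l) * fact (Suc (2 * l + q)) / (fact l * fact (Suc q))
      * fact (Suc (Suc (m + 2 * l + q))) / fact (Suc (Suc (m + l + q)))"
    using D_coeff_eq[of l "r - 1" "Suc m"] r by (simp add: add_ac)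
  show ?thesis
    unfolding lhs rhs by (simp add: r field_simps del: of_nat_Suc)
qed

lemma D_coeff_Suc_Suc:
  "D_coeff (Suc r) m (Suc l) = D_coeff r (Suc m) (Suc l) + 8 * real r * real (m + r + 1) * D_coeff (r - 1) (Suc m) l"
proof (cases "2 * l < r")
  case True
  then have "real (r - Suc (2 * l)) = real r - 2 * real l - 1"
    by (simp add: of_nat_diff)
  with True show ?thesis
    unfolding D_coeff_Suc_Suc_ratio[OF True] D_coeff_Suc_ratio[OF True] by (simp add: field_simps)
next
  case False
  then show ?thesis
    by (cases r) (auto simp: D_coeff_def)
qed

lemma sum_D_coeff_Suc:
  fixes x :: "nat \<Rightarrow> 'a::real_vector"
  shows "(\<Sum>l\<le>Suc r. D_coeff (Suc r) m l *\<^sub>R x l)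
    = (\<Sum>l\<le>r. D_coeff r (Suc m) l *\<^sub>R x l)
      + (8 * real r * real (m + r + 1)) *\<^sub>R (\<Sum>l\<le>r. D_coeff (r - 1) (Suc m) l *\<^sub>R x (Suc l))"
proof -
  have "(\<Sum>l\<le>Suc r. D_coeff (Suc r) m l *\<^sub>R x l) = x 0 + (\<Sum>l\<le>r. D_coeff (Suc r) m (Suc l) *\<^sub>R x (Suc l))"
    by (subst sum.atMost_Suc_shift) (simp add: D_coeff_0)
  also have "\<dots> = (x 0 + (\<Sum>l\<le>r. D_coeff r (Suc m) (Suc l) *\<^sub>R x (Suc l)))
      + (8 * real r * real (m + r + 1)) *\<^sub>R (\<Sum>l\<le>r. D_coeff (r - 1) (Suc m) l *\<^sub>R x (Suc l))"
    by (simp add: D_coeff_Suc_Suc scaleR_add_left sum.distrib scaleR_sum_right)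
  also have "x 0 + (\<Sum>l\<le>r. D_coeff r (Suc m) (Suc l) *\<^sub>R x (Suc l)) = (\<Sum>l\<le>Suc r. D_coeff r (Suc m) l *\<^sub>R x l)"
    by (subst sum.atMost_Suc_shift) (simp add: D_coeff_0)
  also have "\<dots> = (\<Sum>l\<le>r. D_coeff r (Suc m) l *\<^sub>R x l)"
    by (simp add: D_coeff_eq_0)
  finally show ?thesis .
qed

definition D_sum :: "(real \<Rightarrow> complex) \<Rightarrow> nat \<Rightarrow> nat \<Rightarrow> real \<Rightarrow> complex" where
  "D_sum f r m t = (\<Sum>l = 0..r div 2.
     complex_of_real (2 ^ (2 * l) * fact r / (fact l * fact (r - 2 * l)) * fact (m + r) / fact (m + r - l))
     * (Dop ^^ (r - 2 * l)) (Gfun f (m + r - l) 0) t)"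

definition D_term :: "(real \<Rightarrow> complex) \<Rightarrow> nat \<Rightarrow> nat \<Rightarrow> nat \<Rightarrow> real \<Rightarrow> complex" where
  "D_term f r m l = (Dop ^^ (r - 2 * l)) (Gfun f (m + r - l) 0)"

lemma D_sum_eq_sum_atMost:
  assumes "r \<le> N"
  shows "D_sum f r m t = (\<Sum>l\<le>N. D_coeff r m l *\<^sub>R D_term f r m l t)"
  unfolding D_sum_def D_term_def
proof (rule sum.mono_neutral_cong_left)
  show "\<forall>l\<in>{..N} - {0..r div 2}. D_coeff r m l *\<^sub>R (Dop ^^ (r - 2 * l)) (Gfun f (m + r - l) 0) t = 0"
    by (auto simp: D_coeff_eq_0)
qed (use assms in \<open>auto simp: D_coeff_def scaleR_conv_of_real\<close>)

lemma Dop_D_term: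
  "2 * l \<le> r \<Longrightarrow> Dop (D_term f r (Suc m) l) = D_term f (Suc r) m l"
  by (simp add: D_term_def Suc_diff_le)

lemma D_term_diff_Suc:
  "2 * l < r \<Longrightarrow> D_term f (r - 1) (Suc m) l = D_term f (Suc r) m (Suc l)"
  by (simp add: D_term_def)

lemma Dop_D_sum:
  assumes f: "continuous_on {0..1} f" and t: "t \<in> {0<..<1}"
  shows "Dop (D_sum f r (Suc m)) t = (\<Sum>l\<le>r. D_coeff r (Suc m) l *\<^sub>R D_term f (Suc r) m l t)"
proof -
  have "Dop (D_sum f r (Suc m)) t = Dop (\<lambda>s. \<Sum>l\<le>r. D_coeff r (Suc m) l *\<^sub>R D_term f r (Suc m) l s) t"
    by (rule arg_cong[where f = "\<lambda>\<phi>. Dop \<phi> t"]) (intro ext D_sum_eq_sum_atMost order_refl)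
  also have "\<dots> = (\<Sum>l\<le>r. D_coeff r (Suc m) l *\<^sub>R Dop (D_term f r (Suc m) l) t)"
    using t unfolding D_term_def by (intro Dop_sum has_vector_derivative_funpow_Dop_Gfun[OF f]) auto
  also have "\<dots> = (\<Sum>l\<le>r. D_coeff r (Suc m) l *\<^sub>R D_term f (Suc r) m l t)"
  proof (intro sum.cong refl)
    fix l
    show "D_coeff r (Suc m) l *\<^sub>R Dop (D_term f r (Suc m) l) t = D_coeff r (Suc m) l *\<^sub>R D_term f (Suc r) m l t"
      by (cases "2 * l \<le> r") (simp_all add: Dop_D_term D_coeff_eq_0)
  qed
  finally show ?thesis .
qed

lemma D_sum_Suc:
  assumes f: "continuous_on {0..1} f" and t: "t \<in> {0<..<1}"
  shows "D_sum f (Suc r) m t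
    = Dop (D_sum f r (Suc m)) t + (8 * real r * real (m + r + 1)) *\<^sub>R D_sum f (r - 1) (Suc m) t"
proof -
  have tail: "(8 * real r * real (m + r + 1)) *\<^sub>R D_sum f (r - 1) (Suc m) t
    = (8 * real r * real (m + r + 1)) *\<^sub>R (\<Sum>l\<le>r. D_coeff (r - 1) (Suc m) l *\<^sub>R D_term f (Suc r) m (Suc l) t)"
  proof (cases "r = 0")
    case False
    have "D_sum f (r - 1) (Suc m) t = (\<Sum>l\<le>r. D_coeff (r - 1) (Suc m) l *\<^sub>R D_term f (r - 1) (Suc m) l t)"
      by (rule D_sum_eq_sum_atMost) simp
    also have "\<dots> = (\<Sum>l\<le>r. D_coeff (r - 1) (Suc m) l *\<^sub>R D_term f (Suc r) m (Suc l) t)"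
    proof (intro sum.cong refl)
      fix l
      show "D_coeff (r - 1) (Suc m) l *\<^sub>R D_term f (r - 1) (Suc m) l t
        = D_coeff (r - 1) (Suc m) l *\<^sub>R D_term f (Suc r) m (Suc l) t"
        using False by (cases "2 * l < r") (simp_all only: D_term_diff_Suc, simp add: D_coeff_eq_0)
    qed
    finally show ?thesis
      by simp
  qed simp
  have "D_sum f (Suc r) m t = (\<Sum>l\<le>Suc r. D_coeff (Suc r) m l *\<^sub>R D_term f (Suc r) m l t)"
    by (rule D_sum_eq_sum_atMost) simp
  then show ?thesis
    unfolding Dop_D_sum[OF f t] tail sum_D_coeff_Suc .
qed

lemma D_sum_eq_Gfun:
  assumes f: "continuous_on {0..1} f" and "t \<in> {0<..<1}"
  shows "D_sum f r m t = (4 ^ r * pochhammer (real m + 1) r) *\<^sub>R Gfun f m r t"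
  using assms(2)
proof (induction r arbitrary: m t rule: less_induct)
  case (less r)
  show ?case
  proof (cases r)
    case 0
    then show ?thesis
      by (simp add: D_sum_def)
  next
    case (Suc q)
    define \<kappa> where "\<kappa> = 4 ^ q * pochhammer (real m + 2) q"
    have IH: "D_sum f p (Suc m) s = (4 ^ p * pochhammer (real m + 2) p) *\<^sub>R Gfun f (Suc m) p s"
      if "p \<le> q" "s \<in> {0<..<1}" for p s
      using less.IH[of p s "Suc m"] Suc that by (simp add: add_ac)
    have "Dop (D_sum f q (Suc m)) t = Dop (\<lambda>s. \<kappa> *\<^sub>R Gfun f (Suc m) q s) t"
      by (rule Dop_cong[of "{0<..<1}"]) (use IH less.prems in \<open>simp_all add: \<kappa>_def\<close>)
    also have "\<dots> = \<kappa> *\<^sub>R ((4 * real (Suc m)) *\<^sub>R Gfun f m (Suc q) t - (2 * real q) *\<^sub>R Gfun f (Suc m) (q - 1) t)"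
      using has_vector_derivative_Gfun[OF f, of "Suc m" t q] less.prems by (intro Dop_scaleR) simp_all
    finally have Dop_part: "Dop (D_sum f q (Suc m)) t
      = \<kappa> *\<^sub>R ((4 * real (Suc m)) *\<^sub>R Gfun f m (Suc q) t - (2 * real q) *\<^sub>R Gfun f (Suc m) (q - 1) t)" .
    have tail: "(8 * real q * real (m + q + 1)) *\<^sub>R D_sum f (q - 1) (Suc m) t
      = (2 * real q * \<kappa>) *\<^sub>R Gfun f (Suc m) (q - 1) t"
    proof (cases q)
      case (Suc p)
      then show ?thesis
        using IH[of p t] less.prems by (simp add: \<kappa>_def pochhammer_rec' algebra_simps)
    qed simp
    have "4 ^ r * pochhammer (real m + 1) r = 4 * real (Suc m) * \<kappa>"
      by (simp add: Suc \<kappa>_def pochhammer_rec add_ac)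
    then show ?thesis
      using D_sum_Suc[OF f less.prems, of q m] Dop_part tail Suc by (simp add: algebra_simps)
  qed
qed

lemma prod_of_nat_add_eq_pochhammer:
  "(\<Prod>k = 1..r. a + of_nat k) = pochhammer (a + 1) r"
  for a :: "'a::comm_semiring_1"
  by (induction r) (simp_all add: pochhammer_rec' algebra_simps)

lemma continuous_on_if_smooth_on_nonneg:
  assumes "smooth_on_nonneg f"
  shows "continuous_on {0..1} f"
proof -
  obtain Df where "Df 0 = f"
    and "\<forall>k. \<forall>x\<ge>0. (Df k has_vector_derivative Df (Suc k) x) (at x within {0..})"
    using assms unfolding smooth_on_nonneg_def by blast
  then have "continuous_on {0..} f"
    by (intro continuous_on_vector_derivative[where f' = "Df 1"]) auto
  then show ?thesis
    by (rule continuous_on_subset) auto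
qed

theorem lemma3p6:
  fixes f :: "real \<Rightarrow> complex" and \<rho> t :: real and r m :: nat
  assumes "smooth_on_nonneg f"
    and "\<rho> < 1"
    and "\<forall>x\<ge>0. x > \<rho> \<longrightarrow> f x = 0"
    and "0 < t" and "t < 1"
  shows "(\<Sum>l = 0..r div 2.
            complex_of_real (2 ^ (2 * l) * fact r / (fact l * fact (r - 2 * l))
                             * fact (m + r) / fact (m + r - l))
            * (Dop ^^ (r - 2 * l)) (Gfun f (m + r - l) 0) t)
         = complex_of_real (4 ^ r * (\<Prod>k = 1..r. real (m + k))) * Gfun f m r t"
proof -
  have "D_sum f r m t = (4 ^ r * pochhammer (real m + 1) r) *\<^sub>R Gfun f m r t"
    using D_sum_eq_Gfun[OF continuous_on_if_smooth_on_nonneg[OF assms(1)]] assms(4,5) by simp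
  moreover have "(\<Prod>k = 1..r. real (m + k)) = pochhammer (real m + 1) r"
    using prod_of_nat_add_eq_pochhammer[of "real m" r] by simp
  ultimately show ?thesis
    by (simp add: D_sum_def scaleR_conv_of_real)
qed

end
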